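(* Let $\mathcal{L}$ be a square lattice and $\alpha \in \mathcal{L}$. Then $|E_\alpha| \geq |\mathcal{L}| - |J(\mathcal{L})|$.
   Context: All lattices are finite distributive lattices. An element $x$ of $\mathcal{L}$ is join-irreducible if $x = y \vee z$ implies $x = y$ or $x = z$ (so the minimum of $\mathcal{L}$ is join-irreducible); $J(\mathcal{L})$ denotes the poset of join-irreducibles. $\mathcal{L}$ is a tree lattice if the Hasse diagram of $J(\mathcal{L})$ is a tree; its root is the minimum element. A square lattice is a tree lattice such that in the Hasse diagram of $J(\mathcal{L})$ every vertex other than the root has degree at most two. A diamond in $\mathcal{L}$ is a set $D = \{x, y, x \vee y, x \wedge y\}$ with $x, y \in \mathcal{L}$ non-comparable. For $\alpha \in \mathcal{L}$, $E_\alpha = \{(\alpha, \gamma) : \text{there is a diamond } D \text{ of } \mathcal{L} \text{ with } \alpha, \gamma \in D\}$. *)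

theory Defs
  imports Main
begin

text \<open>Finite distributive lattices are represented by finite types of class distrib_lattice;
the lattice is UNIV.\<close>

definition join_irreducible :: "'a::distrib_lattice \<Rightarrow> bool" where
  "join_irreducible x \<longleftrightarrow> (\<forall>y z. x = sup y z \<longrightarrow> x = y \<or> x = z)"

definition JI :: "'a::distrib_lattice set" where
  "JI = {x. join_irreducible x}"

definition hasse_edge :: "'a::distrib_lattice \<Rightarrow> 'a \<Rightarrow> bool" where
  "hasse_edge x y \<longleftrightarrow> x \<in> JI \<and> y \<in> JI \<and>
     ((x < y \<and> \<not> (\<exists>z\<in>JI. x < z \<and> z < y)) \<or> (y < x \<and> \<not> (\<exists>z\<in>JI. y < z \<and> z < x)))"

definition graph_connected :: "'v set \<Rightarrow> ('v \<Rightarrow> 'v \<Rightarrow> bool) \<Rightarrow> bool" where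
  "graph_connected V E \<longleftrightarrow>
     (\<forall>u\<in>V. \<forall>v\<in>V. (u, v) \<in> ({(a, b). a \<in> V \<and> b \<in> V \<and> E a b})\<^sup>*)"

definition is_cycle :: "'v set \<Rightarrow> ('v \<Rightarrow> 'v \<Rightarrow> bool) \<Rightarrow> 'v list \<Rightarrow> bool" where
  "is_cycle V E cs \<longleftrightarrow> length cs \<ge> 3 \<and> distinct cs \<and> set cs \<subseteq> V \<and>
     (\<forall>i. Suc i < length cs \<longrightarrow> E (cs ! i) (cs ! Suc i)) \<and> E (last cs) (hd cs)"

definition is_tree :: "'v set \<Rightarrow> ('v \<Rightarrow> 'v \<Rightarrow> bool) \<Rightarrow> bool" where
  "is_tree V E \<longleftrightarrow> V \<noteq> {} \<and> graph_connected V E \<and> \<not> (\<exists>cs. is_cycle V E cs)"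

definition degree :: "'v set \<Rightarrow> ('v \<Rightarrow> 'v \<Rightarrow> bool) \<Rightarrow> 'v \<Rightarrow> nat" where
  "degree V E v = card {w\<in>V. E v w}"

definition tree_lattice :: "'a::{finite,distrib_lattice} itself \<Rightarrow> bool" where
  "tree_lattice _ \<longleftrightarrow> is_tree (JI :: 'a set) hasse_edge"

text \<open>The root is the minimum element of the lattice.\<close>
definition square_lattice :: "'a::{finite,distrib_lattice} itself \<Rightarrow> bool" where
  "square_lattice T \<longleftrightarrow> tree_lattice T \<and>
     (\<forall>v\<in>(JI :: 'a set). \<not> (\<forall>y. v \<le> y) \<longrightarrow> degree JI hasse_edge v \<le> 2)"

definition diamond :: "'a::distrib_lattice set \<Rightarrow> bool" where
  "diamond D \<longleftrightarrow> (\<exists>x y. \<not> x \<le> y \<and> \<not> y \<le> x \<and> D = {x, y, sup x y, inf x y})"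

definition E_set :: "'a::distrib_lattice \<Rightarrow> ('a \<times> 'a) set" where
  "E_set \<alpha> = {(a, \<gamma>). a = \<alpha> \<and> (\<exists>D. diamond D \<and> \<alpha> \<in> D \<and> \<gamma> \<in> D)}"

end

theory Submission
  imports Defs
begin

text \<open>If \<open>L\<close> is a chain, every element is join-irreducible and there is nothing to prove.
Otherwise the square-lattice hypothesis forces \<open>L\<close> to be a direct product of two nontrivial
lattices. Indeed, below any join-irreducible the join-irreducibles form a chain (two incomparable
ones would close a cycle in the Hasse tree through two lower covers), and above any non-root
join-irreducible they form a chain (a second upper cover would give degree three). Hence
comparability is transitive through non-root join-irreducibles, so for a fixed non-root \<open>j\<close> the
non-root join-irreducibles comparable with \<open>j\<close> and the remaining ones have joins \<open>e\<close>, \<open>f\<close>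
with \<open>e \<sqinter> f = 0\<close> and \<open>e \<squnion> f = 1\<close>, and \<open>L \<cong> [0,e] \<times> [0,f]\<close>. In such a product any two
elements lie in a common diamond, so \<open>E\<^sub>\<alpha>\<close> contains every pair \<open>(\<alpha>, \<gamma>)\<close>.\<close>

lemma finite_order_less_induct [case_names less]:
  fixes x :: "'a::{finite,order}"
  assumes "\<And>x. (\<And>y. y < x \<Longrightarrow> P y) \<Longrightarrow> P x"
  shows "P x"
proof -
  have "wfp ((<) :: 'a \<Rightarrow> 'a \<Rightarrow> bool)"
    by (rule strict_partial_order_wfp_on_finite_set) (simp_all add: finite)
  then show ?thesis using assms by (rule wfp_induct_rule)
qed

lemma finite_order_greater_induct [case_names greater]:
  fixes x :: "'a::{finite,order}"
  assumes "\<And>x. (\<And>y. x < y \<Longrightarrow> P y) \<Longrightarrow> P x"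
  shows "P x"
proof -
  have "wfp ((>) :: 'a \<Rightarrow> 'a \<Rightarrow> bool)"
    by (rule strict_partial_order_wfp_on_finite_set) (simp_all add: finite)
  then show ?thesis using assms by (rule wfp_induct_rule)
qed

lemma ex_least: "\<exists>b::'a::{finite,lattice}. \<forall>y. b \<le> y"
  using Inf_fin.coboundedI[OF finite UNIV_I] by blast

lemma least_in_JI:
  fixes b :: "'a::distrib_lattice"
  assumes "\<forall>y. b \<le> y"
  shows "b \<in> JI"
  unfolding JI_def join_irreducible_def
proof (intro CollectI allI impI)
  fix y z assume "b = sup y z"
  then have "y \<le> b" by simp
  with assms have "b = y" by (simp add: antisym)
  then show "b = y \<or> b = z" ..
qed

lemma JI_eq_UNIV_if_chain:
  assumes "\<forall>x y::'a::distrib_lattice. x \<le> y \<or> y \<le> x"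
  shows "(JI :: 'a set) = UNIV"
proof -
  have "x \<in> JI" for x :: 'a
    unfolding JI_def join_irreducible_def
  proof (intro CollectI allI impI)
    fix y z assume "x = sup y z"
    then show "x = y \<or> x = z" using assms by (metis sup.absorb1 sup.absorb2)
  qed
  then show ?thesis by blast
qed

lemma le_if_join_irreducibles_le:
  fixes x y :: "'a::{finite,distrib_lattice}"
  assumes "\<And>t. t \<in> JI \<Longrightarrow> t \<le> x \<Longrightarrow> t \<le> y"
  shows "x \<le> y"
  using assms
proof (induction x rule: finite_order_less_induct)
  case (less x)
  show ?case
  proof (cases "x \<in> JI")
    case True
    then show ?thesis using less.prems by blast
  next
    case False
    then obtain u v where uv: "x = sup u v" "x \<noteq> u" "x \<noteq> v"
      unfolding JI_def join_irreducible_def by auto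
    have below: "w \<le> y" if "w < x" for w
    proof (rule less.IH[OF that])
      fix t assume "t \<in> JI" "t \<le> w"
      then show "t \<le> y" using that less.prems by (meson less_imp_le order_trans)
    qed
    have "u < x" "v < x" using uv by (auto simp: less_le)
    with uv show ?thesis by (simp add: below)
  qed
qed

lemma join_irreducible_le_supD:
  fixes t :: "'a::distrib_lattice"
  assumes "t \<in> JI" "t \<le> sup x y"
  shows "t \<le> x \<or> t \<le> y"
proof -
  have "t = sup (inf t x) (inf t y)" using assms(2) by (metis inf.absorb1 inf_sup_distrib1)
  then have "t = inf t x \<or> t = inf t y" using assms(1) unfolding JI_def join_irreducible_def by blast
  then show ?thesis by (metis inf.orderI)
qed

lemma join_irreducible_le_Sup_finD:
  fixes t :: "'a::distrib_lattice"
  assumes "finite S" "S \<noteq> {}" "t \<in> JI" "t \<le> Sup_fin S"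
  shows "\<exists>s\<in>S. t \<le> s"
  using assms
proof (induction S rule: finite_ne_induct)
  case (singleton x)
  then show ?case by simp
next
  case (insert x F)
  then have "t \<le> sup x (Sup_fin F)" by simp
  then show ?case using join_irreducible_le_supD[OF insert.prems(1)] insert.IH insert.prems by blast
qed

lemma hasse_edge_sym: "hasse_edge x y \<longleftrightarrow> hasse_edge y x"
  unfolding hasse_edge_def by blast

lemma hasse_edge_JI: "hasse_edge x y \<Longrightarrow> x \<in> JI \<and> y \<in> JI"
  unfolding hasse_edge_def by blast

lemma hasse_edge_nothing_between:
  assumes "hasse_edge x y" "y < x"
  shows "\<not> (\<exists>z\<in>JI. y < z \<and> z < x)"
  using assms unfolding hasse_edge_def by (meson order.asym)

lemma ex_upper_cover:
  fixes t :: "'a::{finite,distrib_lattice}"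
  assumes "t \<in> JI" "u \<in> JI" "t < u"
  shows "\<exists>c\<in>JI. t < c \<and> c \<le> u \<and> hasse_edge t c"
proof -
  obtain c where c: "c \<in> {z\<in>JI. t < z \<and> z \<le> u}"
    and min: "\<forall>z\<in>{z\<in>JI. t < z \<and> z \<le> u}. z \<le> c \<longrightarrow> c = z"
    using finite_has_minimal[OF finite, of "{z\<in>JI. t < z \<and> z \<le> u}"] assms by blast
  have "\<not> (\<exists>z\<in>JI. t < z \<and> z < c)"
  proof
    assume "\<exists>z\<in>JI. t < z \<and> z < c"
    then obtain z where z: "z \<in> JI" "t < z" "z < c" by blast
    then have "z \<in> {z\<in>JI. t < z \<and> z \<le> u}" using c by auto
    then have "c = z" using min z(3) by auto
    with z(3) show False by simp
  qed
  then have "hasse_edge t c" unfolding hasse_edge_def using c assms by auto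
  then show ?thesis using c by auto
qed

lemma ex_lower_cover:
  fixes t :: "'a::{finite,distrib_lattice}"
  assumes "t \<in> JI" "s \<in> JI" "s < t"
  shows "\<exists>d\<in>JI. s \<le> d \<and> d < t \<and> hasse_edge t d"
proof -
  obtain d where d: "d \<in> {z\<in>JI. s \<le> z \<and> z < t}"
    and max: "\<forall>z\<in>{z\<in>JI. s \<le> z \<and> z < t}. d \<le> z \<longrightarrow> d = z"
    using finite_has_maximal[OF finite, of "{z\<in>JI. s \<le> z \<and> z < t}"] assms by blast
  have "\<not> (\<exists>z\<in>JI. d < z \<and> z < t)"
  proof
    assume "\<exists>z\<in>JI. d < z \<and> z < t"
    then obtain z where z: "z \<in> JI" "d < z" "z < t" by blast
    then have "z \<in> {z\<in>JI. s \<le> z \<and> z < t}" using d by auto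
    then have "d = z" using max z(2) by auto
    with z(2) show False by simp
  qed
  then have "hasse_edge t d" unfolding hasse_edge_def using d assms by auto
  then show ?thesis using d by auto
qed

lemma hasse_path_if_chain_below:
  fixes d m :: "'a::{finite,distrib_lattice}"
  assumes "m \<in> JI" "d \<in> JI" "m \<le> d"
    and "\<And>s1 s2. s1 \<in> JI \<Longrightarrow> s2 \<in> JI \<Longrightarrow> s1 \<le> d \<Longrightarrow> s2 \<le> d \<Longrightarrow> s1 \<le> s2 \<or> s2 \<le> s1"
  shows "\<exists>p. p \<noteq> [] \<and> hd p = d \<and> last p = m \<and> set p = {z\<in>JI. m \<le> z \<and> z \<le> d}
      \<and> distinct p \<and> successively hasse_edge p"
  using assms(2-)
proof (induction d rule: finite_order_less_induct)
  case (less d)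
  show ?case
  proof (cases "d = m")
    case True
    then have "{z\<in>JI. m \<le> z \<and> z \<le> d} = {m}" using less.prems by (auto intro: antisym)
    then show ?thesis using True by (intro exI[of _ "[m]"]) auto
  next
    case False
    then have "m < d" using less.prems by simp
    then obtain d' where d': "d' \<in> JI" "m \<le> d'" "d' < d" "hasse_edge d d'"
      using ex_lower_cover[OF less.prems(1) assms(1)] by blast
    have chain': "s1 \<le> s2 \<or> s2 \<le> s1" if "s1 \<in> JI" "s2 \<in> JI" "s1 \<le> d'" "s2 \<le> d'" for s1 s2
      using less.prems(3) that d'(3) by (meson less_imp_le order_trans)
    obtain p where p: "p \<noteq> []" "hd p = d'" "last p = m" "set p = {z\<in>JI. m \<le> z \<and> z \<le> d'}"
        "distinct p" "successively hasse_edge p"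
      using less.IH[OF d'(3) d'(1) d'(2) chain'] by blast
    have "set (d # p) = {z\<in>JI. m \<le> z \<and> z \<le> d}"
    proof
      show "set (d # p) \<subseteq> {z\<in>JI. m \<le> z \<and> z \<le> d}" using p(4) less.prems(1,2) d'(3) by auto
      show "{z\<in>JI. m \<le> z \<and> z \<le> d} \<subseteq> set (d # p)"
      proof
        fix z assume z: "z \<in> {z\<in>JI. m \<le> z \<and> z \<le> d}"
        show "z \<in> set (d # p)"
        proof (cases "z = d")
          case False
          then have "z < d" using z by auto
          have "z \<le> d' \<or> d' \<le> z" using less.prems(3)[of z d'] z d'(1) d'(3) by auto
          then have "z \<le> d'"
            using hasse_edge_nothing_between[OF d'(4) d'(3)] \<open>z < d\<close> z
            by (auto simp: order.order_iff_strict)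
          then show ?thesis using p(4) z by auto
        qed simp
      qed
    qed
    moreover have "d \<notin> set p" using p(4) d'(3) by auto
    moreover have "successively hasse_edge (d # p)" using p(1,2,6) d'(4)
      by (simp add: successively_Cons)
    ultimately show ?thesis using p by (intro exI[of _ "d # p"]) auto
  qed
qed

lemma is_cycle_append_paths:
  assumes p: "p \<noteq> []" "hd p = d1" "last p = m" "distinct p" "successively E p"
    and q: "q \<noteq> []" "hd q = m" "last q = d2" "distinct q" "successively E q"
    and meet: "set p \<inter> set q = {m}" and "d2 \<noteq> m"
    and t: "t \<notin> set p \<union> set q" "E t d1" "E d2 t"
    and V: "insert t (set p \<union> set q) \<subseteq> V"
  shows "is_cycle V E (t # p @ tl q)"
proof -
  obtain r where qr: "q = m # r" using q(1,2) by (cases q) auto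
  have "r \<noteq> []" using qr q(3) \<open>d2 \<noteq> m\<close> by auto
  have r: "last r = d2" "distinct r" "m \<notin> set r" "successively E r" "E m (hd r)"
    using qr q(3-5) \<open>r \<noteq> []\<close> by (auto simp: successively_Cons)
  let ?cs = "t # p @ r"
  have "set r \<subseteq> set q" using qr by auto
  then have "set p \<inter> set r = set p \<inter> set q \<inter> set r" by blast
  also have "\<dots> = {}" using meet r(3) by simp
  finally have "set p \<inter> set r = {}" .
  moreover have "t \<notin> set p" "t \<notin> set r" using t(1) \<open>set r \<subseteq> set q\<close> by auto
  ultimately have "distinct ?cs" using p(4) r(2) by simp
  moreover have "length ?cs \<ge> 3" using p(1) \<open>r \<noteq> []\<close> by (cases p; cases r) auto
  moreover have "set ?cs \<subseteq> V" using V qr by auto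
  moreover have "successively E ?cs" using p(1-3,5) r(4,5) t(2) \<open>r \<noteq> []\<close>
    by (simp add: successively_append_iff successively_Cons)
  moreover have "E (last ?cs) (hd ?cs)" using r(1) t(3) \<open>r \<noteq> []\<close> by simp
  ultimately show ?thesis unfolding is_cycle_def qr by (simp add: successively_conv_nth)
qed

lemma square_lattice_no_cycle:
  assumes "square_lattice TYPE('a::{finite,distrib_lattice})"
  shows "\<not> is_cycle (JI::'a set) hasse_edge cs"
  using assms unfolding square_lattice_def tree_lattice_def is_tree_def by blast

lemma square_lattice_degree_le_2:
  fixes t :: "'a::{finite,distrib_lattice}"
  assumes "square_lattice TYPE('a)" "t \<in> JI" "\<not> (\<forall>y. t \<le> y)"
  shows "card {w\<in>JI. hasse_edge t w} \<le> 2"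
  using assms unfolding square_lattice_def degree_def by blast

lemma square_lattice_upper_cover_unique:
  fixes t :: "'a::{finite,distrib_lattice}"
  assumes sq: "square_lattice TYPE('a)" and t: "t \<in> JI" "\<not> (\<forall>y. t \<le> y)"
    and c: "hasse_edge t c1" "hasse_edge t c2" "t < c1" "t < c2"
  shows "c1 = c2"
proof (rule ccontr)
  assume "c1 \<noteq> c2"
  obtain b :: 'a where b: "\<forall>y. b \<le> y" using ex_least by blast
  then have "b < t" using t by (metis order.order_iff_strict)
  then obtain s where s: "s < t" "hasse_edge t s"
    using ex_lower_cover[OF t(1) least_in_JI[OF b]] by blast
  have sub: "{s, c1, c2} \<subseteq> {w\<in>JI. hasse_edge t w}" using s c hasse_edge_JI by blast
  have "s \<noteq> c1" "s \<noteq> c2" using s c by (meson order.asym)+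
  then have "card {s, c1, c2} = 3" using \<open>c1 \<noteq> c2\<close> by simp
  then have "3 \<le> card {w\<in>JI. hasse_edge t w}" using card_mono[OF _ sub] by simp
  with square_lattice_degree_le_2[OF sq t] show False by linarith
qed

lemma square_lattice_chain_above:
  fixes t :: "'a::{finite,distrib_lattice}"
  assumes sq: "square_lattice TYPE('a)"
    and "t \<in> JI" "\<not> (\<forall>y. t \<le> y)" "u1 \<in> JI" "u2 \<in> JI" "t < u1" "t < u2"
  shows "u1 \<le> u2 \<or> u2 \<le> u1"
  using assms(2-)
proof (induction t rule: finite_order_greater_induct)
  case (greater t)
  obtain c1 where c1: "c1 \<in> JI" "t < c1" "c1 \<le> u1" "hasse_edge t c1"
    using ex_upper_cover[OF greater.prems(1,3,5)] by blast
  obtain c2 where c2: "c2 \<in> JI" "t < c2" "c2 \<le> u2" "hasse_edge t c2"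
    using ex_upper_cover[OF greater.prems(1,4,6)] by blast
  have "c1 = c2"
    using square_lattice_upper_cover_unique[OF sq greater.prems(1,2) c1(4) c2(4) c1(2) c2(2)] .
  show ?case
  proof (cases "u1 = c1 \<or> u2 = c2")
    case True
    then show ?thesis using \<open>c1 = c2\<close> c1 c2 by blast
  next
    case False
    then have "c1 < u1" "c1 < u2" using c1 c2 \<open>c1 = c2\<close> by auto
    moreover have "\<not> (\<forall>y. c1 \<le> y)" using c1(2) by (meson order.strict_iff_not)
    ultimately show ?thesis using greater.IH[OF c1(2) c1(1)] greater.prems(3,4) by blast
  qed
qed

text \<open>Two incomparable join-irreducibles below \<open>t\<close> lie below two distinct lower covers
\<open>d1\<close>, \<open>d2\<close> of \<open>t\<close>; joining \<open>t\<close>, the Hasse paths from \<open>d1\<close> and \<open>d2\<close> down to their greatest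
common join-irreducible lower bound \<open>m\<close> gives a cycle.\<close>

lemma square_lattice_chain_below:
  fixes t :: "'a::{finite,distrib_lattice}"
  assumes sq: "square_lattice TYPE('a)"
    and "t \<in> JI" "s1 \<in> JI" "s2 \<in> JI" "s1 \<le> t" "s2 \<le> t"
  shows "s1 \<le> s2 \<or> s2 \<le> s1"
  using assms(2-)
proof (induction t arbitrary: s1 s2 rule: finite_order_less_induct)
  case (less t)
  show ?case
  proof (rule ccontr)
    assume incomparable: "\<not> (s1 \<le> s2 \<or> s2 \<le> s1)"
    then have "s1 < t" "s2 < t" using less.prems by (auto simp: order.order_iff_strict)
    obtain d1 where d1: "d1 \<in> JI" "s1 \<le> d1" "d1 < t" "hasse_edge t d1"
      using ex_lower_cover[OF less.prems(1,2) \<open>s1 < t\<close>] by blast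
    obtain d2 where d2: "d2 \<in> JI" "s2 \<le> d2" "d2 < t" "hasse_edge t d2"
      using ex_lower_cover[OF less.prems(1,3) \<open>s2 < t\<close>] by blast
    have chain1: "x \<le> y \<or> y \<le> x" if "x \<in> JI" "y \<in> JI" "x \<le> d1" "y \<le> d1" for x y
      using less.IH[OF d1(3) d1(1) that] .
    have chain2: "x \<le> y \<or> y \<le> x" if "x \<in> JI" "y \<in> JI" "x \<le> d2" "y \<le> d2" for x y
      using less.IH[OF d2(3) d2(1) that] .
    have "d1 \<noteq> d2" using chain1 less.prems d1 d2 incomparable by blast
    then have incomparable12: "\<not> d1 \<le> d2" "\<not> d2 \<le> d1"
      using hasse_edge_nothing_between[OF d1(4,3)] hasse_edge_nothing_between[OF d2(4,3)] d1 d2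
      by (auto simp: order.order_iff_strict)
    obtain b :: 'a where b: "\<forall>y. b \<le> y" using ex_least by blast
    obtain m where m: "m \<in> {z\<in>JI. z \<le> d1 \<and> z \<le> d2}"
      and m_max: "\<forall>z\<in>{z\<in>JI. z \<le> d1 \<and> z \<le> d2}. m \<le> z \<longrightarrow> m = z"
      using finite_has_maximal[OF finite, of "{z\<in>JI. z \<le> d1 \<and> z \<le> d2}"] least_in_JI[OF b] b
      by blast
    have m_greatest: "z \<le> m" if "z \<in> JI" "z \<le> d1" "z \<le> d2" for z
      using chain1[of z m] m_max m that by auto
    obtain p1 where p1: "p1 \<noteq> []" "hd p1 = d1" "last p1 = m"
        "set p1 = {z\<in>JI. m \<le> z \<and> z \<le> d1}" "distinct p1" "successively hasse_edge p1"
      using hasse_path_if_chain_below[OF _ d1(1) _ chain1] m by blast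
    obtain p2 where p2: "p2 \<noteq> []" "hd p2 = d2" "last p2 = m"
        "set p2 = {z\<in>JI. m \<le> z \<and> z \<le> d2}" "distinct p2" "successively hasse_edge p2"
      using hasse_path_if_chain_below[OF _ d2(1) _ chain2] m by blast
    have q: "rev p2 \<noteq> []" "hd (rev p2) = m" "last (rev p2) = d2" "distinct (rev p2)"
      using p2 by (simp_all add: hd_rev last_rev)
    have "successively hasse_edge (rev p2)"
      unfolding successively_rev using p2(6) hasse_edge_sym
      by (metis (no_types, lifting) successively_mono)
    moreover have "set p1 \<inter> set (rev p2) = {m}"
      using p1(4) p2(4) m m_greatest by (auto intro: antisym)
    moreover have "d2 \<noteq> m" using m incomparable12 by auto
    moreover have "t \<notin> set p1 \<union> set (rev p2)" using p1(4) p2(4) d1(3) d2(3) by auto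
    moreover note d1(4)
    moreover have "hasse_edge d2 t" using d2(4) hasse_edge_sym by blast
    moreover have "insert t (set p1 \<union> set (rev p2)) \<subseteq> JI" using p1(4) p2(4) less.prems(1) by auto
    ultimately have "is_cycle JI hasse_edge (t # p1 @ tl (rev p2))"
      by (rule is_cycle_append_paths[OF p1(1,2,3,5,6) q])
    then show False using square_lattice_no_cycle[OF sq] by blast
  qed
qed

lemma square_lattice_comparable_trans:
  fixes s t u :: "'a::{finite,distrib_lattice}"
  assumes sq: "square_lattice TYPE('a)" and b: "\<forall>y. b \<le> y"
    and J: "s \<in> JI" "t \<in> JI" "u \<in> JI" "t \<noteq> b"
    and st: "s \<le> t \<or> t \<le> s" and tu: "t \<le> u \<or> u \<le> t"
  shows "s \<le> u \<or> u \<le> s"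
proof (cases "s \<le> t")
  case True
  show ?thesis
  proof (cases "t \<le> u")
    case True
    then show ?thesis using \<open>s \<le> t\<close> by (meson order_trans)
  next
    case False
    then have "u \<le> t" using tu by blast
    then show ?thesis using square_lattice_chain_below[OF sq J(2) J(1) J(3) \<open>s \<le> t\<close>] by blast
  qed
next
  case False
  then have "t < s" using st by (auto simp: less_le)
  show ?thesis
  proof (cases "u \<le> t")
    case True
    then show ?thesis using \<open>t < s\<close> by (meson less_imp_le order_trans)
  next
    case False
    then have "t < u" using tu by (auto simp: less_le)
    moreover have "\<not> (\<forall>y. t \<le> y)" using J(4) b antisym by blast
    ultimately show ?thesis using square_lattice_chain_above[OF sq J(2) _ J(3) J(1)] \<open>t < s\<close> by blast
  qed
qed

lemma sup_Sup_fin_top: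
  fixes P Q :: "'a::{finite,distrib_lattice} set"
  assumes "\<forall>y. b \<le> y" "P \<noteq> {}" "Q \<noteq> {}" "JI - {b} \<subseteq> P \<union> Q"
  shows "z \<le> sup (Sup_fin P) (Sup_fin Q)"
proof (rule le_if_join_irreducibles_le)
  fix t assume "t \<in> JI" "t \<le> z"
  show "t \<le> sup (Sup_fin P) (Sup_fin Q)"
  proof (cases "t = b")
    case False
    then have "t \<in> P \<or> t \<in> Q" using assms(4) \<open>t \<in> JI\<close> by auto
    then show ?thesis using assms(2,3) by (meson Sup_fin.coboundedI finite le_supI1 le_supI2)
  qed (use assms(1) in simp)
qed

lemma inf_Sup_fin_eq_least:
  fixes P Q :: "'a::{finite,distrib_lattice} set"
  assumes b: "\<forall>y. b \<le> y" and "P \<noteq> {}" "Q \<noteq> {}"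
    and separated: "\<And>t p q. t \<in> JI \<Longrightarrow> t \<noteq> b \<Longrightarrow> p \<in> P \<Longrightarrow> q \<in> Q \<Longrightarrow> t \<le> p \<Longrightarrow> t \<le> q \<Longrightarrow> False"
  shows "inf (Sup_fin P) (Sup_fin Q) = b"
proof (rule antisym[OF le_if_join_irreducibles_le])
  fix t assume t: "t \<in> JI" "t \<le> inf (Sup_fin P) (Sup_fin Q)"
  obtain p where "p \<in> P" "t \<le> p" using join_irreducible_le_Sup_finD[OF _ \<open>P \<noteq> {}\<close> t(1)] t(2) by auto
  moreover obtain q where "q \<in> Q" "t \<le> q" using join_irreducible_le_Sup_finD[OF _ \<open>Q \<noteq> {}\<close> t(1)] t(2) by auto
  ultimately have "t = b" using separated t(1) by blast
  then show "t \<le> b" by simp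
qed (use b in simp)

lemma square_lattice_split:
  fixes b x y :: "'a::{finite,distrib_lattice}"
  assumes sq: "square_lattice TYPE('a)" and b: "\<forall>y. b \<le> y" and "\<not> x \<le> y" "\<not> y \<le> x"
  shows "\<exists>e f. inf e f = b \<and> (\<forall>z. z \<le> sup e f) \<and> e \<noteq> b \<and> f \<noteq> b"
proof -
  obtain j where j: "j \<in> JI" "j \<le> x" "\<not> j \<le> y"
    using le_if_join_irreducibles_le[of x y] assms(3) by blast
  obtain k where k: "k \<in> JI" "k \<le> y" "\<not> k \<le> x"
    using le_if_join_irreducibles_le[of y x] assms(4) by blast
  have "j \<noteq> b" "k \<noteq> b" using j k b by auto
  have "\<not> j \<le> k" "\<not> k \<le> j" using j k by (meson order_trans)+
  define P where "P = {t\<in>JI. t \<noteq> b \<and> (t \<le> j \<or> j \<le> t)}"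
  define Q where "Q = {t\<in>JI. t \<noteq> b} - P"
  have "j \<in> P" unfolding P_def using j \<open>j \<noteq> b\<close> by auto
  have "k \<in> Q" unfolding Q_def P_def using k \<open>k \<noteq> b\<close> \<open>\<not> j \<le> k\<close> \<open>\<not> k \<le> j\<close> by auto
  have separated: False
    if t: "t \<in> JI" "t \<noteq> b" and "p \<in> P" "q \<in> Q" "t \<le> p" "t \<le> q" for t p q
  proof -
    have "p \<in> JI" "p \<noteq> b" "p \<le> j \<or> j \<le> p" using \<open>p \<in> P\<close> unfolding P_def by auto
    then have "t \<le> j \<or> j \<le> t"
      using square_lattice_comparable_trans[OF sq b t(1) _ j(1)] \<open>t \<le> p\<close> by blast
    moreover have "q \<in> JI" "q \<notin> P" using \<open>q \<in> Q\<close> unfolding Q_def by auto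
    ultimately have "q \<le> j \<or> j \<le> q"
      using square_lattice_comparable_trans[OF sq b _ t(1) j(1) t(2)] \<open>t \<le> q\<close> by blast
    then show False using \<open>q \<in> Q\<close> unfolding Q_def P_def by auto
  qed
  have "j \<le> Sup_fin P" "k \<le> Sup_fin Q"
    using \<open>j \<in> P\<close> \<open>k \<in> Q\<close> by (simp_all add: Sup_fin.coboundedI)
  then have "Sup_fin P \<noteq> b" "Sup_fin Q \<noteq> b" using \<open>j \<noteq> b\<close> \<open>k \<noteq> b\<close> b by (auto intro: antisym)
  moreover have "inf (Sup_fin P) (Sup_fin Q) = b"
    by (rule inf_Sup_fin_eq_least[OF b]) (use \<open>j \<in> P\<close> \<open>k \<in> Q\<close> separated in blast)+
  moreover have "\<forall>z. z \<le> sup (Sup_fin P) (Sup_fin Q)"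
  proof
    fix z
    have cover: "JI - {b} \<subseteq> P \<union> Q" unfolding Q_def P_def by auto
    show "z \<le> sup (Sup_fin P) (Sup_fin Q)"
      by (rule sup_Sup_fin_top[OF b _ _ cover]) (use \<open>j \<in> P\<close> \<open>k \<in> Q\<close> in auto)
  qed
  ultimately show ?thesis by (intro exI[of _ "Sup_fin P"] exI[of _ "Sup_fin Q"]) blast
qed

lemma incomparable_diamond: "\<not> x \<le> y \<Longrightarrow> \<not> y \<le> x \<Longrightarrow> diamond {x, y, sup x y, inf x y}"
  unfolding diamond_def by blast

lemma inf_inf_distrib_right: "inf (inf x y) z = inf (inf x z) (inf (y::'a::semilattice_inf) z)"
  by (simp add: inf_assoc inf_commute inf_left_commute)

text \<open>Inside this context \<open>x \<mapsto> (x \<sqinter> e, x \<sqinter> f)\<close> is an isomorphism of the lattice onto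
\<open>[b, e] \<times> [b, f]\<close>, with inverse \<open>(u, v) \<mapsto> u \<squnion> v\<close>.\<close>

context
  fixes b e f :: "'a::distrib_lattice"
  assumes least: "\<forall>y. b \<le> y" and inf_ef: "inf e f = b" and top: "\<forall>x. x \<le> sup e f"
begin

lemma eq_least: "z \<le> b \<Longrightarrow> z = b"
  using least antisym by blast

lemma sup_components: "x = sup (inf x e) (inf x f)"
proof -
  have "x = inf x (sup e f)" using top by (simp add: inf.absorb1)
  then show ?thesis by (simp add: inf_sup_distrib1)
qed

lemma eq_if_components_eq: "inf x e = inf y e \<Longrightarrow> inf x f = inf y f \<Longrightarrow> x = y"
  using sup_components[of x] sup_components[of y] by simp

lemma component_e: "u \<le> e \<Longrightarrow> v \<le> f \<Longrightarrow> inf (sup u v) e = u"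
proof -
  assume u: "u \<le> e" and v: "v \<le> f"
  have "inf v e \<le> inf f e" using v by (rule inf_mono) simp
  then have "inf v e = b" using inf_ef eq_least by (simp add: inf_commute)
  then show ?thesis using u least by (simp add: inf_sup_distrib2 inf.absorb1 sup.absorb1)
qed

lemma component_f: "u \<le> e \<Longrightarrow> v \<le> f \<Longrightarrow> inf (sup u v) f = v"
proof -
  assume u: "u \<le> e" and v: "v \<le> f"
  have "inf u f \<le> inf e f" using u by (simp add: le_infI1)
  then have "inf u f = b" using inf_ef eq_least by simp
  then show ?thesis using v least by (simp add: inf_sup_distrib2 inf.absorb1 sup.absorb2)
qed

text \<open>With \<open>a \<le> c\<close> and \<open>a\<^sub>1 < c\<^sub>1\<close> in the first component: if \<open>a\<^sub>2 < c\<^sub>2\<close>, use the diamond spanned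
by \<open>(c\<^sub>1, a\<^sub>2)\<close> and \<open>(a\<^sub>1, c\<^sub>2)\<close>; if \<open>a\<^sub>2 = c\<^sub>2 \<noteq> b\<close>, pair \<open>a\<close> with \<open>(c\<^sub>1, b)\<close>; if \<open>a\<^sub>2 = c\<^sub>2 = b\<close>,
pair \<open>c\<close> with \<open>(a\<^sub>1, f)\<close>.\<close>

lemma ex_diamond_if_le_first_component_less:
  assumes f_nontrivial: "f \<noteq> b" and ac: "a \<le> c" and ne: "inf a e \<noteq> inf c e"
  shows "\<exists>D. diamond D \<and> a \<in> D \<and> c \<in> D"
proof -
  define a1 a2 c1 c2 where "a1 = inf a e" "a2 = inf a f" "c1 = inf c e" "c2 = inf c f"
  note defs = this
  have le: "a1 \<le> c1" "a2 \<le> c2" using ac unfolding defs by (simp_all add: le_infI1)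
  have sub: "a1 \<le> e" "c1 \<le> e" "a2 \<le> f" "c2 \<le> f" unfolding defs by auto
  have n1: "\<not> c1 \<le> a1" using le ne unfolding defs by (meson antisym)
  show ?thesis
  proof (cases "a2 = c2")
    case False
    have n2: "\<not> c2 \<le> a2" using le False by (meson antisym)
    define x where "x = sup c1 a2"
    define y where "y = sup a1 c2"
    have cx: "inf x e = c1" "inf x f = a2" unfolding x_def using sub component_e component_f by auto
    have cy: "inf y e = a1" "inf y f = c2" unfolding y_def using sub component_e component_f by auto
    have nxy: "\<not> x \<le> y" using cx cy n1 by (metis inf_mono order_refl)
    have nyx: "\<not> y \<le> x" using cx cy n2 by (metis inf_mono order_refl)
    have "inf x y = a"
      by (rule eq_if_components_eq)
        (simp_all add: inf_inf_distrib_right cx cy defs[symmetric] le inf.absorb1 inf.absorb2)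
    moreover have "sup x y = c"
      by (rule eq_if_components_eq)
        (simp_all add: inf_sup_distrib2 cx cy defs[symmetric] le sup.absorb1 sup.absorb2)
    ultimately show ?thesis
      using incomparable_diamond[OF nxy nyx] by (intro exI[of _ "{x, y, sup x y, inf x y}"]) auto
  next
    case True
    show ?thesis
    proof (cases "a2 = b")
      case False
      define y where "y = c1"
      have yf: "inf y f = b" unfolding y_def using sub inf_ef eq_least by (metis inf_mono order_refl)
      have cy: "inf y e = c1" unfolding y_def using sub by (simp add: inf.absorb1)
      have n1': "\<not> y \<le> a" using cy n1 unfolding defs by (metis inf_mono order_refl)
      have n2': "\<not> a \<le> y" using yf False eq_least unfolding defs by (metis inf_mono order_refl)
      have "sup a y = c"
        by (rule eq_if_components_eq)
          (simp_all add: inf_sup_distrib2 cy yf defs[symmetric] le True sup.absorb1 sup.absorb2 least)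
      then show ?thesis
        using incomparable_diamond[OF n2' n1'] by (intro exI[of _ "{a, y, sup a y, inf a y}"]) auto
    next
      case a2b: True
      define y where "y = sup a1 f"
      have cy: "inf y e = a1" "inf y f = f" unfolding y_def using sub component_e component_f by auto
      have n1': "\<not> c \<le> y" using cy n1 unfolding defs by (metis inf_mono order_refl)
      have n2': "\<not> y \<le> c" using cy f_nontrivial True a2b eq_least unfolding defs
        by (metis inf_mono order_refl)
      have "inf c y = a"
        by (rule eq_if_components_eq)
          (simp_all add: inf_inf_distrib_right cy defs[symmetric] le True inf.absorb1 inf.absorb2 sub)
      then show ?thesis
        using incomparable_diamond[OF n1' n2'] by (intro exI[of _ "{c, y, sup c y, inf c y}"]) auto
    qed
  qed
qed

end

lemma ex_diamond_through_pair:
  fixes b e f a c :: "'a::distrib_lattice"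
  assumes b: "\<forall>y. b \<le> y" and ef: "inf e f = b" and top: "\<forall>x. x \<le> sup e f"
    and "e \<noteq> b" "f \<noteq> b"
  shows "\<exists>D. diamond D \<and> a \<in> D \<and> c \<in> D"
proof -
  have fe: "inf f e = b" "\<forall>x. x \<le> sup f e" using ef top by (simp_all add: inf_commute sup_commute)
  have comparable_pair: "\<exists>D. diamond D \<and> x \<in> D \<and> y \<in> D" if "x \<le> y" "x \<noteq> y" for x y :: 'a
  proof (cases "inf x e = inf y e")
    case True
    then have "inf x f \<noteq> inf y f" using eq_if_components_eq[OF b ef top] \<open>x \<noteq> y\<close> by blast
    then show ?thesis
      using ex_diamond_if_le_first_component_less[OF b fe \<open>e \<noteq> b\<close> \<open>x \<le> y\<close>] by blast
  next
    case False
    then show ?thesis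
      using ex_diamond_if_le_first_component_less[OF b ef top \<open>f \<noteq> b\<close> \<open>x \<le> y\<close>] by blast
  qed
  have distinct_pair: "\<exists>D. diamond D \<and> x \<in> D \<and> y \<in> D" if "x \<noteq> y" for x y :: 'a
  proof (cases "x \<le> y")
    case True
    then show ?thesis using comparable_pair \<open>x \<noteq> y\<close> by blast
  next
    case False
    show ?thesis
    proof (cases "y \<le> x")
      case True
      then have "\<exists>D. diamond D \<and> y \<in> D \<and> x \<in> D" using comparable_pair \<open>x \<noteq> y\<close> by blast
      then show ?thesis by blast
    next
      case False
      then show ?thesis using incomparable_diamond[OF \<open>\<not> x \<le> y\<close> False] by blast
    qed
  qed
  show ?thesis
  proof (cases "a = c")
    case True
    define c' where "c' = (if a = b then e else b)"
    have "a \<noteq> c'" using \<open>e \<noteq> b\<close> by (simp add: c'_def)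
    then show ?thesis using distinct_pair[of a c'] True by blast
  next
    case False
    then show ?thesis using distinct_pair by blast
  qed
qed

theorem theorem2:
  fixes \<alpha> :: "'a::{finite,distrib_lattice}"
  assumes "square_lattice TYPE('a)"
  shows "card (E_set \<alpha>) \<ge> card (UNIV :: 'a set) - card (JI :: 'a set)"
proof (cases "\<forall>x y::'a. x \<le> y \<or> y \<le> x")
  case True
  then show ?thesis by (simp add: JI_eq_UNIV_if_chain)
next
  case False
  then obtain x y :: 'a where "\<not> x \<le> y" "\<not> y \<le> x" by blast
  obtain b :: 'a where b: "\<forall>y. b \<le> y" using ex_least by blast
  obtain e f where split: "inf e f = b" "\<forall>z. z \<le> sup e f" "e \<noteq> b" "f \<noteq> b"
    using square_lattice_split[OF assms b \<open>\<not> x \<le> y\<close> \<open>\<not> y \<le> x\<close>] by blast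
  have "E_set \<alpha> = Pair \<alpha> ` UNIV"
    unfolding E_set_def using ex_diamond_through_pair[OF b split] by auto
  then have "card (E_set \<alpha>) = card (UNIV :: 'a set)" by (simp add: card_image inj_on_def)
  then show ?thesis by simp
qed

end
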